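(* Let $I=[0,1]$ or $I=[0,\infty)$ and let $X$ be a Banach ideal function space on $I$ such that the Cesàro operator $C$ is bounded on $X$. Then $CX$ contains a complemented subspace isomorphic to $L_1[0,1]$. Moreover, if $\chi_{[0,a]}\in X$ for $0<a<1$, then $\widetilde X\neq\{0\}$ and $\widetilde X$ contains a complemented subspace isomorphic to $L_\infty[0,1]$.
   Context: A Banach ideal space on $I$ is a Banach space $X$ of (classes of) Lebesgue measurable functions on $I$ such that $|f|\le|g|$ a.e. with $g\in X$ implies $f\in X$ and $\|f\|\le\|g\|$; it is assumed that $X$ contains a function $f_0$ with $f_0>0$ a.e. on $I$. The Cesàro operator is $Cf(x)=\frac1x\int_0^x f(t)\,dt$, $x\in I$; $CX=\{f: C|f|\in X\}$ with $\|f\|_{CX}=\|C|f|\|_X$. For measurable $f$ let $\widetilde f(x)=\operatorname{ess\,sup}_{t\in I,t\ge x}|f(t)|$, and $\widetilde X=\{f:\widetilde f\in X\}$ with $\|f\|_{\widetilde X}=\|\widetilde f\|_X$. $\chi_E$ denotes the indicator of $E$. *)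

theory Defs
  imports "HOL-Analysis.Analysis" "HOL-Probability.Essential_Supremum"
begin

text \<open>Functions are real-valued functions on the reals; an element of a function space on I
  is identified with its class modulo equality a.e. on I (equality in a space is expressed by
  the norm of the difference being zero).\<close>

definition banach_ideal_space ::
  "real set \<Rightarrow> (real \<Rightarrow> real) set \<Rightarrow> ((real \<Rightarrow> real) \<Rightarrow> real) \<Rightarrow> bool" where
  "banach_ideal_space I X N \<longleftrightarrow>
     X \<subseteq> borel_measurable (lebesgue_on I) \<and>
     (\<forall>f\<in>X. \<forall>g\<in>X. \<forall>a b. (\<lambda>x. a * f x + b * g x) \<in> X) \<and>
     (\<forall>f\<in>X. 0 \<le> N f) \<and>
     (\<forall>f\<in>X. N f = 0 \<longleftrightarrow> (AE x in lebesgue_on I. f x = 0)) \<and>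
     (\<forall>f\<in>X. \<forall>a. N (\<lambda>x. a * f x) = \<bar>a\<bar> * N f) \<and>
     (\<forall>f\<in>X. \<forall>g\<in>X. N (\<lambda>x. f x + g x) \<le> N f + N g) \<and>
     (\<forall>F. (\<forall>n. F n \<in> X) \<and>
          (\<forall>e>0. \<exists>M. \<forall>m\<ge>M. \<forall>n\<ge>M. N (\<lambda>x. F m x - F n x) < e) \<longrightarrow>
          (\<exists>f\<in>X. (\<lambda>n. N (\<lambda>x. F n x - f x)) \<longlonglongrightarrow> 0)) \<and>
     (\<forall>f g. f \<in> borel_measurable (lebesgue_on I) \<and> g \<in> X \<and>
            (AE x in lebesgue_on I. \<bar>f x\<bar> \<le> \<bar>g x\<bar>) \<longrightarrow> f \<in> X \<and> N f \<le> N g) \<and>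
     (\<exists>f0\<in>X. AE x in lebesgue_on I. f0 x > 0)"

definition cesaro :: "(real \<Rightarrow> real) \<Rightarrow> real \<Rightarrow> real" where
  "cesaro f x = (1 / x) * integral\<^sup>L (lebesgue_on {0..x}) f"

definition loc_int :: "real set \<Rightarrow> (real \<Rightarrow> real) \<Rightarrow> bool" where
  "loc_int I f \<longleftrightarrow> (\<forall>x\<in>I. 0 < x \<longrightarrow> integrable (lebesgue_on {0..x}) f)"

definition cesaro_bounded ::
  "real set \<Rightarrow> (real \<Rightarrow> real) set \<Rightarrow> ((real \<Rightarrow> real) \<Rightarrow> real) \<Rightarrow> bool" where
  "cesaro_bounded I X N \<longleftrightarrow>
     (\<exists>M. \<forall>f\<in>X. loc_int I f \<and> cesaro f \<in> X \<and> N (cesaro f) \<le> M * N f)"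

definition cesaro_space :: "real set \<Rightarrow> (real \<Rightarrow> real) set \<Rightarrow> (real \<Rightarrow> real) set" where
  "cesaro_space I X = {f \<in> borel_measurable (lebesgue_on I).
      loc_int I f \<and> cesaro (\<lambda>t. \<bar>f t\<bar>) \<in> X}"

definition cesaro_norm :: "((real \<Rightarrow> real) \<Rightarrow> real) \<Rightarrow> (real \<Rightarrow> real) \<Rightarrow> real" where
  "cesaro_norm N f = N (cesaro (\<lambda>t. \<bar>f t\<bar>))"

definition ess_sup_tail :: "real set \<Rightarrow> (real \<Rightarrow> real) \<Rightarrow> real \<Rightarrow> ereal" where
  "ess_sup_tail I f x = esssup (lebesgue_on ({x..} \<inter> I)) (\<lambda>t. ereal \<bar>f t\<bar>)"

definition dec_major :: "real set \<Rightarrow> (real \<Rightarrow> real) \<Rightarrow> real \<Rightarrow> real" where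
  "dec_major I f x = real_of_ereal (ess_sup_tail I f x)"

text \<open>X~ = {f : f~ in X} (f~ must be finite, equivalently finite a.e.), norm ||f~||_X.\<close>
definition tilde_space :: "real set \<Rightarrow> (real \<Rightarrow> real) set \<Rightarrow> (real \<Rightarrow> real) set" where
  "tilde_space I X = {f \<in> borel_measurable (lebesgue_on I).
      (\<forall>x\<in>I. 0 < x \<longrightarrow> ess_sup_tail I f x < \<infinity>) \<and> dec_major I f \<in> X}"

definition tilde_norm ::
  "real set \<Rightarrow> ((real \<Rightarrow> real) \<Rightarrow> real) \<Rightarrow> (real \<Rightarrow> real) \<Rightarrow> real" where
  "tilde_norm I N f = N (dec_major I f)"

definition L1_01 :: "(real \<Rightarrow> real) set" where
  "L1_01 = {f. integrable (lebesgue_on {0..1}) f}"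

definition L1_norm :: "(real \<Rightarrow> real) \<Rightarrow> real" where
  "L1_norm f = integral\<^sup>L (lebesgue_on {0..1}) (\<lambda>t. \<bar>f t\<bar>)"

definition Linf_01 :: "(real \<Rightarrow> real) set" where
  "Linf_01 = {f \<in> borel_measurable (lebesgue_on {0..1}).
      esssup (lebesgue_on {0..1}) (\<lambda>t. ereal \<bar>f t\<bar>) < \<infinity>}"

definition Linf_norm :: "(real \<Rightarrow> real) \<Rightarrow> real" where
  "Linf_norm f = real_of_ereal (esssup (lebesgue_on {0..1}) (\<lambda>t. ereal \<bar>f t\<bar>))"

text \<open>The normed function space (E, NE) contains a complemented subspace isomorphic to (F, NF):
  there is a linear isomorphic embedding T of F into E and a bounded linear projection P of E
  onto the subspace T(F) (all identities modulo null elements).\<close>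
definition has_complemented_copy ::
  "(real \<Rightarrow> real) set \<Rightarrow> ((real \<Rightarrow> real) \<Rightarrow> real) \<Rightarrow>
   (real \<Rightarrow> real) set \<Rightarrow> ((real \<Rightarrow> real) \<Rightarrow> real) \<Rightarrow> bool" where
  "has_complemented_copy E NE F NF \<longleftrightarrow>
    (\<exists>T P c C K. 0 < c \<and>
      (\<forall>f\<in>F. T f \<in> E \<and> c * NF f \<le> NE (T f) \<and> NE (T f) \<le> C * NF f) \<and>
      (\<forall>f\<in>F. \<forall>g\<in>F. \<forall>a b.
          NE (\<lambda>x. T (\<lambda>y. a * f y + b * g y) x - (a * T f x + b * T g x)) = 0) \<and>
      (\<forall>u\<in>E. P u \<in> E \<and> NE (P u) \<le> K * NE u \<and> (\<exists>f\<in>F. NE (\<lambda>x. P u x - T f x) = 0)) \<and>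
      (\<forall>u\<in>E. \<forall>v\<in>E. \<forall>a b.
          NE (\<lambda>x. P (\<lambda>y. a * u y + b * v y) x - (a * P u x + b * P v x)) = 0) \<and>
      (\<forall>f\<in>F. NE (\<lambda>x. P (T f) x - T f x) = 0))"

end

theory Submission
  imports Defs
begin

text \<open>
  Both copies consist of functions supported in J = [1/4, 1/2], transplanted from [0, 1] by
  x \<mapsto> 4x - 1, and the projections are multiplication by the indicator of J.

  If g vanishes on [0, 1/4), then C|g|(x) \<le> \<parallel>g\<parallel>/x \<le> (\<parallel>g\<parallel>/m) C f0(x), where \<parallel>g\<parallel> is the
  L1 norm, f0 \<in> X is positive and m is its integral over [0, 1/4]. For every u, C|u| dominates
  the integral of |u| over [0, 1/2] times the indicator of [1/2, 1], which lies in X because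
  C f0 \<ge> m there. Hence the norm of CX is equivalent to the L1 norm on functions supported in J,
  and restriction to J is bounded on CX.

  If f is bounded by D and vanishes right of 1/2, then its decreasing majorant is at most D
  times the indicator of [0, 1/2]. Conversely, the decreasing majorant of any f is at least its
  value at 1/4 times the indicator of (0, 1/4], and that value bounds f a.e. on J. Hence the norm
  of X~ is equivalent to the sup norm on functions supported in J, and restriction to J is bounded
  on X~.
\<close>

lemma AE_lebesgue_affine_iff:
  fixes c t :: real
  assumes "c \<noteq> 0" and "{x. P x} \<in> sets lebesgue"
  shows "(AE x in lebesgue. P x) \<longleftrightarrow> (AE x in lebesgue. P (t + c * x))"
proof -
  have affine: "(\<lambda>x. t + c * x) \<in> lebesgue \<rightarrow>\<^sub>M lebesgue"
    using lebesgue_affine_measurable[where c = "\<lambda>x::real. c"] assms(1) by simp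
  have "(AE x in lebesgue. P x) \<longleftrightarrow>
      (AE x in density (distr lebesgue lebesgue (\<lambda>x. t + c * x)) (\<lambda>_. ennreal \<bar>c\<bar>). P x)"
    by (rule arg_cong[where f = "\<lambda>M. almost_everywhere M P"]) (rule lebesgue_real_affine[OF assms(1)])
  also have "\<dots> \<longleftrightarrow> (AE x in distr lebesgue lebesgue (\<lambda>x. t + c * x). P x)"
    using assms(1) by (subst AE_density) auto
  also have "\<dots> \<longleftrightarrow> (AE x in lebesgue. P (t + c * x))"
    using assms(2) by (intro AE_distr_iff[OF affine]) simp
  finally show ?thesis .
qed

lemma sets_lebesgue_Collect: "Measurable.pred lebesgue P \<Longrightarrow> {x. P x} \<in> sets lebesgue"
  by (simp add: pred_def)

lemma AE_lebesgue_on_iff: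
  "S \<in> sets lebesgue \<Longrightarrow> (AE x in lebesgue_on S. P x) \<longleftrightarrow> (AE x in lebesgue. x \<in> S \<longrightarrow> P x)"
  by (simp add: AE_restrict_space_iff)

lemma atLeast_Int_sets_lebesgue: "S \<in> sets lebesgue \<Longrightarrow> {x::real..} \<inter> S \<in> sets lebesgue"
  by (intro sets.Int) auto

lemma AE_lebesgue_on_affine_iff:
  fixes s t :: real
  assumes "t < s" and "{y. P y} \<in> sets lebesgue"
  shows "(AE y in lebesgue_on {t..s}. P y) \<longleftrightarrow> (AE z in lebesgue_on {0..1}. P (t + (s - t) * z))"
proof -
  have "{y. y \<in> {t..s} \<longrightarrow> P y} = - {t..s} \<union> {y. P y}" by auto
  also have "\<dots> \<in> sets lebesgue"
    using assms(2) by (intro sets.Un) (auto simp: Compl_eq_Diff_UNIV)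
  finally have "(AE y in lebesgue. y \<in> {t..s} \<longrightarrow> P y) \<longleftrightarrow>
      (AE z in lebesgue. t + (s - t) * z \<in> {t..s} \<longrightarrow> P (t + (s - t) * z))"
    using assms(1) by (intro AE_lebesgue_affine_iff) auto
  moreover have "t + (s - t) * z \<in> {t..s} \<longleftrightarrow> z \<in> {0..1}" for z
  proof -
    have "t + (s - t) * z \<le> s \<longleftrightarrow> (s - t) * z \<le> (s - t) * 1" by auto
    also have "\<dots> \<longleftrightarrow> z \<le> 1" using assms(1) by (simp add: mult_le_cancel_left)
    finally show ?thesis using assms(1) by (auto simp: zero_le_mult_iff)
  qed
  ultimately show ?thesis by (simp add: AE_lebesgue_on_iff)
qed

lemma real_of_ereal_mono_bot_or_nonneg:
  fixes a b :: ereal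
  shows "a \<le> b \<Longrightarrow> b < \<infinity> \<Longrightarrow> b = -\<infinity> \<or> 0 \<le> b \<Longrightarrow> real_of_ereal a \<le> real_of_ereal b"
  by (cases a; cases b) auto

lemma esssup_lebesgue_on_mono:
  fixes h :: "real \<Rightarrow> ereal"
  assumes "A \<subseteq> B" "A \<in> sets lebesgue" "B \<in> sets lebesgue" "h \<in> borel_measurable (lebesgue_on B)"
  shows "esssup (lebesgue_on A) h \<le> esssup (lebesgue_on B) h"
proof (rule esssup_I)
  show "h \<in> borel_measurable (lebesgue_on A)"
    using assms(4,1) by (rule measurable_restrict_mono)
  have "AE x in lebesgue_on B. h x \<le> esssup (lebesgue_on B) h" by (rule esssup_AE)
  then show "AE x in lebesgue_on A. h x \<le> esssup (lebesgue_on B) h"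
    using assms(1-3) by (auto simp: AE_lebesgue_on_iff)
qed

text \<open>The essential supremum of a modulus is \<open>-\<infinity>\<close> only over a null set.\<close>
lemma esssup_abs_bot_or_nonneg:
  fixes g :: "real \<Rightarrow> real"
  assumes "g \<in> borel_measurable (lebesgue_on A)"
  shows "esssup (lebesgue_on A) (\<lambda>t. ereal \<bar>g t\<bar>) = -\<infinity> \<or> 0 \<le> esssup (lebesgue_on A) (\<lambda>t. ereal \<bar>g t\<bar>)"
proof (cases "emeasure (lebesgue_on A) (space (lebesgue_on A)) = 0")
  case True
  have "(\<lambda>t. ereal \<bar>g t\<bar>) \<in> borel_measurable (lebesgue_on A)"
    using assms by measurable
  then show ?thesis using esssup_zero_space[OF True] by simp
next
  case False
  have "esssup (lebesgue_on A) (\<lambda>t. ereal 0) \<le> esssup (lebesgue_on A) (\<lambda>t. ereal \<bar>g t\<bar>)"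
    by (rule esssup_mono) auto
  then show ?thesis using esssup_const[OF False, of "ereal 0"] by (simp add: zero_ereal_def)
qed

lemma borel_measurable_lebesgue_on_of_borel:
  fixes f :: "real \<Rightarrow> real"
  assumes "f \<in> borel_measurable borel"
  shows "f \<in> borel_measurable (lebesgue_on S)"
proof -
  have "f \<in> borel_measurable lebesgue"
    using assms by (intro measurable_completion) simp
  then show ?thesis by (rule measurable_restrict_space1)
qed

lemma antimono_borel_measurable_lebesgue_on:
  fixes f :: "real \<Rightarrow> real"
  assumes "antimono f"
  shows "f \<in> borel_measurable (lebesgue_on S)"
proof -
  have "mono (\<lambda>x. - f x)" using assms by (auto simp: mono_def antimono_def)
  then have "(\<lambda>x. - (- f x)) \<in> borel_measurable borel"
    using borel_measurable_mono borel_measurable_uminus by blast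
  then show ?thesis by (intro borel_measurable_lebesgue_on_of_borel) simp
qed

lemma not_AE_indicator_eq_0:
  assumes "S \<subseteq> I" "I \<in> sets lebesgue" "S \<in> sets lebesgue" "emeasure lebesgue S \<noteq> 0"
  shows "\<not> (AE x in lebesgue_on I. (indicator S x :: real) = 0)"
proof
  assume "AE x in lebesgue_on I. (indicator S x :: real) = 0"
  then have "AE x in lebesgue. x \<notin> S"
    using assms(1,2) by (auto simp: AE_lebesgue_on_iff indicator_def)
  then have "S \<in> null_sets lebesgue"
    using AE_iff_measurable[of S lebesgue "\<lambda>x. x \<notin> S"] assms(3) by auto
  with assms(4) show False by auto
qed

lemma AE_lebesgue_on_subset:
  "AE x in lebesgue_on B. P x \<Longrightarrow> A \<subseteq> B \<Longrightarrow> A \<in> sets lebesgue \<Longrightarrow> B \<in> sets lebesgue \<Longrightarrow>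
    AE x in lebesgue_on A. P x"
  by (auto simp: AE_lebesgue_on_iff)

lemma integrable_lebesgue_on_iff:
  fixes f :: "real \<Rightarrow> real"
  shows "S \<in> sets lebesgue \<Longrightarrow> integrable (lebesgue_on S) f \<longleftrightarrow> integrable lebesgue (\<lambda>x. indicator S x * f x)"
  by (simp add: integrable_restrict_space)

lemma integral_lebesgue_on_eq:
  fixes f :: "real \<Rightarrow> real"
  shows "S \<in> sets lebesgue \<Longrightarrow> integral\<^sup>L (lebesgue_on S) f = (\<integral>x. indicator S x * f x \<partial>lebesgue)"
  by (simp add: integral_restrict_space)

lemma integral_lebesgue_on_eq_of_support:
  fixes f :: "real \<Rightarrow> real"
  assumes "S \<in> sets lebesgue" "\<And>x. x \<notin> S \<Longrightarrow> f x = 0"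
  shows "integral\<^sup>L (lebesgue_on S) f = integral\<^sup>L lebesgue f"
proof -
  have "(\<lambda>x. indicator S x * f x) = f"
    using assms(2) by (auto simp: fun_eq_iff indicator_def)
  then show ?thesis by (simp add: integral_lebesgue_on_eq[OF assms(1)])
qed

lemma integral_lebesgue_on_mono_set:
  fixes f :: "real \<Rightarrow> real"
  assumes "A \<subseteq> B" "A \<in> sets lebesgue" "B \<in> sets lebesgue" "integrable (lebesgue_on B) f"
    and "AE x in lebesgue_on B. 0 \<le> f x"
  shows "integral\<^sup>L (lebesgue_on A) f \<le> integral\<^sup>L (lebesgue_on B) f"
proof -
  have int_B: "integrable lebesgue (\<lambda>x. indicator B x * f x)"
    using assms(3,4) by (simp add: integrable_lebesgue_on_iff)
  have "(\<lambda>x. indicator A x * (indicator B x * f x)) = (\<lambda>x. indicator A x * f x)"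
    using assms(1) by (auto simp: fun_eq_iff indicator_def)
  then have int_A: "integrable lebesgue (\<lambda>x. indicator A x * f x)"
    using integrable_mult_indicator[OF assms(2) int_B] by simp
  have "AE x in lebesgue. indicator A x * f x \<le> indicator B x * f x"
    using assms(1,3,5) by (auto simp: AE_lebesgue_on_iff indicator_def)
  then show ?thesis
    using assms(2,3) by (simp add: integral_lebesgue_on_eq integral_mono_AE[OF int_A int_B])
qed

lemma banach_ideal_spaceD:
  assumes "banach_ideal_space I X N"
  shows "X \<subseteq> borel_measurable (lebesgue_on I)"
    and "\<forall>f\<in>X. \<forall>g\<in>X. \<forall>a b. (\<lambda>x. a * f x + b * g x) \<in> X"
    and "\<forall>f\<in>X. 0 \<le> N f"
    and "\<forall>f\<in>X. N f = 0 \<longleftrightarrow> (AE x in lebesgue_on I. f x = 0)"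
    and "\<forall>f\<in>X. \<forall>a. N (\<lambda>x. a * f x) = \<bar>a\<bar> * N f"
    and "\<forall>f g. f \<in> borel_measurable (lebesgue_on I) \<and> g \<in> X \<and>
            (AE x in lebesgue_on I. \<bar>f x\<bar> \<le> \<bar>g x\<bar>) \<longrightarrow> f \<in> X \<and> N f \<le> N g"
    and "\<exists>f0\<in>X. AE x in lebesgue_on I. f0 x > 0"
  using assms unfolding banach_ideal_space_def by - (elim conjE; assumption)+

lemma banach_ideal_space_measurable:
  "banach_ideal_space I X N \<Longrightarrow> f \<in> X \<Longrightarrow> f \<in> borel_measurable (lebesgue_on I)"
  using banach_ideal_spaceD(1) by blast

lemma banach_ideal_space_norm_nonneg:
  "banach_ideal_space I X N \<Longrightarrow> f \<in> X \<Longrightarrow> 0 \<le> N f"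
  using banach_ideal_spaceD(3) by blast

lemma banach_ideal_space_norm_pos:
  assumes "banach_ideal_space I X N" "f \<in> X" "\<not> (AE x in lebesgue_on I. f x = 0)"
  shows "0 < N f"
  using banach_ideal_spaceD(3,4)[OF assms(1)] assms(2,3) by fastforce

lemma banach_ideal_space_scale:
  assumes "banach_ideal_space I X N" "f \<in> X"
  shows "(\<lambda>x. a * f x) \<in> X" "N (\<lambda>x. a * f x) = \<bar>a\<bar> * N f"
proof -
  have "(\<lambda>x. a * f x + 0 * f x) \<in> X"
    using banach_ideal_spaceD(2)[OF assms(1)] assms(2) by blast
  then show "(\<lambda>x. a * f x) \<in> X" by simp
  show "N (\<lambda>x. a * f x) = \<bar>a\<bar> * N f"
    using banach_ideal_spaceD(5)[OF assms(1)] assms(2) by blast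
qed

lemma banach_ideal_space_zero:
  assumes "banach_ideal_space I X N"
  shows "N (\<lambda>x. 0) = 0"
proof -
  obtain f where "f \<in> X" using banach_ideal_spaceD(7)[OF assms] by blast
  from banach_ideal_space_scale(2)[OF assms this, of 0] show ?thesis by simp
qed

lemma banach_ideal_space_dominated:
  assumes "banach_ideal_space I X N" "f \<in> borel_measurable (lebesgue_on I)" "h \<in> X" "0 \<le> c"
    and "\<And>x. x \<in> I \<Longrightarrow> \<bar>f x\<bar> \<le> c * \<bar>h x\<bar>"
  shows "f \<in> X" "N f \<le> c * N h"
proof -
  have "(\<lambda>x. c * h x) \<in> X" "N (\<lambda>x. c * h x) = c * N h"
    using banach_ideal_space_scale[OF assms(1,3)] assms(4) by auto
  moreover have "AE x in lebesgue_on I. \<bar>f x\<bar> \<le> \<bar>c * h x\<bar>"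
    using assms(4,5) by (intro AE_I2) (auto simp: abs_mult)
  ultimately show "f \<in> X" "N f \<le> c * N h"
    using banach_ideal_spaceD(6)[OF assms(1), rule_format, of f "\<lambda>x. c * h x"] assms(2) by auto
qed

lemma banach_ideal_space_minorant:
  assumes "banach_ideal_space I X N" "g \<in> X" "h \<in> X" "0 \<le> c"
    and "\<And>x. x \<in> I \<Longrightarrow> c * \<bar>h x\<bar> \<le> \<bar>g x\<bar>"
  shows "c * N h \<le> N g"
proof -
  have "(\<lambda>x. c * h x) \<in> X" "N (\<lambda>x. c * h x) = c * N h"
    using banach_ideal_space_scale[OF assms(1,3)] assms(4) by auto
  then show ?thesis
    using banach_ideal_space_dominated(2)[OF assms(1) _ assms(2), of "\<lambda>x. c * h x" 1]
      banach_ideal_space_measurable[OF assms(1)] assms(4,5) by (auto simp: abs_mult)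
qed

lemma has_complemented_copyI:
  assumes zero: "NE (\<lambda>x. 0) = 0"
    and T_linear: "\<And>f g a b. T (\<lambda>y. a * f y + b * g y) = (\<lambda>x. a * T f x + b * T g x)"
    and P_linear: "\<And>u v a b. P (\<lambda>y. a * u y + b * v y) = (\<lambda>x. a * P u x + b * P v x)"
    and P_T: "\<And>f. f \<in> F \<Longrightarrow> P (T f) = T f"
    and P_factors: "\<And>u. u \<in> E \<Longrightarrow> R u \<in> F \<and> P u = T (R u)"
    and "0 < c"
    and T_bounds: "\<And>f. f \<in> F \<Longrightarrow> T f \<in> E \<and> c * NF f \<le> NE (T f) \<and> NE (T f) \<le> C * NF f"
    and P_bound: "\<And>u. u \<in> E \<Longrightarrow> NE (P u) \<le> K * NE u"
  shows "has_complemented_copy E NE F NF"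
proof -
  have "P u \<in> E \<and> (\<exists>f\<in>F. NE (\<lambda>x. P u x - T f x) = 0)" if "u \<in> E" for u
    using P_factors[OF that] T_bounds zero by (auto intro!: bexI[of _ "R u"])
  then show ?thesis
    unfolding has_complemented_copy_def using assms
    by (intro exI[of _ T] exI[of _ P] exI[of _ c] exI[of _ C] exI[of _ K]) auto
qed

section \<open>Transplanting [0, 1] onto [1/4, 1/2]\<close>

lemma Linf_01_esssup:
  assumes "f \<in> Linf_01"
  shows "esssup (lebesgue_on {0..1}) (\<lambda>t. ereal \<bar>f t\<bar>) = ereal (Linf_norm f)"
proof -
  have "f \<in> borel_measurable (lebesgue_on {0..1})"
    and finite: "esssup (lebesgue_on {0..1}) (\<lambda>t. ereal \<bar>f t\<bar>) < \<infinity>"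
    using assms unfolding Linf_01_def by auto
  then have "esssup (lebesgue_on {0..1::real}) (\<lambda>t. ereal 0) \<le> esssup (lebesgue_on {0..1}) (\<lambda>t. ereal \<bar>f t\<bar>)"
    by (intro esssup_mono) auto
  moreover have "emeasure (lebesgue_on {0..1::real}) (space (lebesgue_on {0..1})) \<noteq> 0"
    by (simp add: emeasure_restrict_space)
  ultimately show ?thesis
    using finite unfolding Linf_norm_def
    by (cases "esssup (lebesgue_on {0..1}) (\<lambda>t. ereal \<bar>f t\<bar>)") (auto simp: esssup_const)
qed

lemma Linf_01_AE_bound:
  assumes "f \<in> Linf_01"
  shows "AE y in lebesgue_on {0..1}. \<bar>f y\<bar> \<le> Linf_norm f"
proof -
  have "AE y in lebesgue_on {0..1}. ereal \<bar>f y\<bar> \<le> esssup (lebesgue_on {0..1}) (\<lambda>t. ereal \<bar>f t\<bar>)"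
    by (rule esssup_AE)
  then show ?thesis using Linf_01_esssup[OF assms] by simp
qed

lemma Linf_norm_nonneg: "f \<in> Linf_01 \<Longrightarrow> 0 \<le> Linf_norm f"
  using Linf_01_esssup[of f] esssup_abs_bot_or_nonneg[of f "{0..1}"] by (auto simp: Linf_01_def)

definition compress :: "(real \<Rightarrow> real) \<Rightarrow> real \<Rightarrow> real" where
  "compress f x = indicator {1/4..1/2} x * f (4 * x - 1)"

definition cutoff :: "(real \<Rightarrow> real) \<Rightarrow> real \<Rightarrow> real" where
  "cutoff u x = indicator {1/4..1/2} x * u x"

lemma compress_linear: "compress (\<lambda>y. a * f y + b * g y) = (\<lambda>x. a * compress f x + b * compress g x)"
  by (simp add: compress_def fun_eq_iff algebra_simps)

lemma cutoff_linear: "cutoff (\<lambda>y. a * u y + b * v y) = (\<lambda>x. a * cutoff u x + b * cutoff v x)"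
  by (simp add: cutoff_def fun_eq_iff algebra_simps)

lemma cutoff_compress: "cutoff (compress f) = compress f"
  by (simp add: cutoff_def compress_def fun_eq_iff indicator_def)

lemma cutoff_eq_compress: "cutoff u = compress (\<lambda>z. u (1/4 + z/4))"
proof -
  have "1/4 + (4 * x - 1) / 4 = x" for x :: real by (simp add: field_simps)
  then show ?thesis by (simp add: cutoff_def compress_def fun_eq_iff)
qed

lemma compress_eq_affine: "compress f = (\<lambda>x. indicator {0..1} (-1 + 4 * x) * f (-1 + 4 * x))"
  by (auto simp: compress_def fun_eq_iff indicator_def)

lemma compress_at_affine: "z \<in> {0..1} \<Longrightarrow> compress f (1/4 + z/4) = f z"
  by (simp add: compress_def)

lemma compress_measurable:
  assumes "f \<in> borel_measurable (lebesgue_on {0..1})"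
  shows "compress f \<in> borel_measurable lebesgue"
proof -
  have "(\<lambda>y. indicator {0..1} y * f y) \<in> borel_measurable lebesgue"
    using assms borel_measurable_restrict_space_iff[of "{0..1}" lebesgue f] by simp
  from borel_measurable_affine[OF this, of 4 "-1"] show ?thesis
    unfolding compress_eq_affine by simp
qed

lemma compress_Linf_AE_bound:
  assumes "f \<in> Linf_01"
  shows "AE x in lebesgue. \<bar>compress f x\<bar> \<le> Linf_norm f"
proof -
  have meas [measurable]: "compress f \<in> borel_measurable lebesgue"
    using assms by (intro compress_measurable) (simp add: Linf_01_def)
  have "AE z in lebesgue_on {0..1}. z \<in> {0..1}"
    by (rule AE_I2) simp
  then have "AE z in lebesgue_on {0..1}. \<bar>compress f (1/4 + z/4)\<bar> \<le> Linf_norm f"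
    using Linf_01_AE_bound[OF assms] by eventually_elim (simp add: compress_at_affine)
  moreover have "{y. \<bar>compress f y\<bar> \<le> Linf_norm f} \<in> sets lebesgue"
    by (intro sets_lebesgue_Collect) measurable
  ultimately have "AE y in lebesgue_on {1/4..1/2}. \<bar>compress f y\<bar> \<le> Linf_norm f"
    using AE_lebesgue_on_affine_iff[of "1/4" "1/2" "\<lambda>y. \<bar>compress f y\<bar> \<le> Linf_norm f" ] by simp
  then show ?thesis
    using Linf_norm_nonneg[OF assms]
    by (auto simp: AE_lebesgue_on_iff compress_def indicator_def)
qed

lemma compress_L1:
  assumes "f \<in> L1_01"
  shows "integrable lebesgue (compress f)" "(\<integral>x. \<bar>compress f x\<bar> \<partial>lebesgue) = L1_norm f / 4"
proof -
  define F where "F y = indicator {0..1} y * f y" for y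
  have F: "integrable lebesgue F"
    using assms unfolding L1_01_def F_def by (simp add: integrable_lebesgue_on_iff)
  have compress_F: "compress f = (\<lambda>x. F (-1 + 4 * x))"
    unfolding compress_eq_affine F_def ..
  show "integrable lebesgue (compress f)"
    unfolding compress_F using lebesgue_integrable_real_affine[OF F, of 4 "-1"] by simp
  have "(\<integral>y. \<bar>F y\<bar> \<partial>lebesgue) = \<bar>4\<bar> *\<^sub>R (\<integral>x. \<bar>F (-1 + 4 * x)\<bar> \<partial>lebesgue)"
    by (rule lebesgue_integral_real_affine) simp
  moreover have "(\<integral>y. \<bar>F y\<bar> \<partial>lebesgue) = L1_norm f"
    unfolding L1_norm_def F_def by (simp add: integral_lebesgue_on_eq abs_mult)
  ultimately show "(\<integral>x. \<bar>compress f x\<bar> \<partial>lebesgue) = L1_norm f / 4"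
    unfolding compress_F by simp
qed

locale ideal_space_on_interval =
  fixes I :: "real set" and X :: "(real \<Rightarrow> real) set" and N :: "(real \<Rightarrow> real) \<Rightarrow> real"
  assumes banach_ideal: "banach_ideal_space I X N"
    and sets_I [simp]: "I \<in> sets lebesgue"
    and unit_interval_subset: "{0..1} \<subseteq> I"
    and nonneg: "I \<subseteq> {0..}"
    and initial_segment: "x \<in> I \<Longrightarrow> {0..x} \<subseteq> I"
begin

lemma unit_interval_in_I: "0 \<le> x \<Longrightarrow> x \<le> 1 \<Longrightarrow> x \<in> I"
  using unit_interval_subset by auto

section \<open>The space X~\<close>

lemma abs_measurable_on_tail:
  "u \<in> borel_measurable (lebesgue_on I) \<Longrightarrow> (\<lambda>t. ereal \<bar>u t\<bar>) \<in> borel_measurable (lebesgue_on ({x..} \<inter> I))"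
  by (intro measurable_compose[OF _ borel_measurable_ereal] borel_measurable_abs)
    (rule measurable_restrict_mono, auto)

lemma ess_sup_tail_antimono:
  "u \<in> borel_measurable (lebesgue_on I) \<Longrightarrow> x \<le> y \<Longrightarrow> ess_sup_tail I u y \<le> ess_sup_tail I u x"
  unfolding ess_sup_tail_def
  by (rule esssup_lebesgue_on_mono) (auto intro: atLeast_Int_sets_lebesgue abs_measurable_on_tail)

lemma ess_sup_tail_bot_or_nonneg:
  "u \<in> borel_measurable (lebesgue_on I) \<Longrightarrow> ess_sup_tail I u x = -\<infinity> \<or> 0 \<le> ess_sup_tail I u x"
  unfolding ess_sup_tail_def by (rule esssup_abs_bot_or_nonneg) (rule measurable_restrict_mono, auto)

lemma dec_major_nonneg: "u \<in> borel_measurable (lebesgue_on I) \<Longrightarrow> 0 \<le> dec_major I u x"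
  using ess_sup_tail_bot_or_nonneg[of u x] unfolding dec_major_def by (auto intro: real_of_ereal_pos)

lemma dec_major_antimono:
  "u \<in> borel_measurable (lebesgue_on I) \<Longrightarrow> x \<le> y \<Longrightarrow> ess_sup_tail I u x < \<infinity> \<Longrightarrow>
    dec_major I u y \<le> dec_major I u x"
  unfolding dec_major_def
  by (intro real_of_ereal_mono_bot_or_nonneg ess_sup_tail_antimono ess_sup_tail_bot_or_nonneg)

lemma ess_sup_tail_le:
  assumes "u \<in> borel_measurable (lebesgue_on I)" "AE y in lebesgue_on I. x \<le> y \<longrightarrow> \<bar>u y\<bar> \<le> D"
  shows "ess_sup_tail I u x \<le> ereal D"
  unfolding ess_sup_tail_def
proof (rule esssup_I)
  show "(\<lambda>t. ereal \<bar>u t\<bar>) \<in> borel_measurable (lebesgue_on ({x..} \<inter> I))"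
    using assms(1) by (rule abs_measurable_on_tail)
  show "AE t in lebesgue_on ({x..} \<inter> I). ereal \<bar>u t\<bar> \<le> ereal D"
    using assms(2) by (auto simp: AE_lebesgue_on_iff atLeast_Int_sets_lebesgue)
qed

lemma dec_major_zero: "dec_major I (\<lambda>x. 0) = (\<lambda>x. 0)"
proof
  fix x
  have "ess_sup_tail I (\<lambda>x. 0) x \<le> ereal 0"
    by (rule ess_sup_tail_le) auto
  then have "dec_major I (\<lambda>x. 0) x \<le> 0"
    unfolding dec_major_def by (cases "ess_sup_tail I (\<lambda>x. 0) x") auto
  with dec_major_nonneg[of "\<lambda>x. 0" x] show "dec_major I (\<lambda>x. 0) x = 0" by simp
qed

lemma tilde_norm_zero: "tilde_norm I N (\<lambda>x. 0) = 0"
  unfolding tilde_norm_def dec_major_zero using banach_ideal by (rule banach_ideal_space_zero)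

lemma tilde_space_of_bounded_support:
  assumes g: "g \<in> borel_measurable (lebesgue_on I)" and "0 \<le> D"
    and bounded: "AE y in lebesgue_on I. \<bar>g y\<bar> \<le> D" and support: "\<And>y. b < y \<Longrightarrow> g y = 0"
    and indicator_b: "indicator {0..b} \<in> X"
  shows "g \<in> tilde_space I X" "tilde_norm I N g \<le> D * N (indicator {0..b})"
proof -
  have le_D: "ess_sup_tail I g x \<le> ereal D" for x
    by (rule ess_sup_tail_le[OF g]) (use bounded in auto)
  have finite: "ess_sup_tail I g x < \<infinity>" for x
    using le_D[of x] by (auto intro: le_less_trans)
  have le_0: "ess_sup_tail I g x \<le> ereal 0" if "b < x" for x
    by (rule ess_sup_tail_le[OF g]) (use that support in auto)
  have major_le: "dec_major I g x \<le> D * indicator {0..b} x" if "x \<in> I" for x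
  proof -
    have "0 \<le> x" using that nonneg by auto
    then show ?thesis
      using le_D[of x] le_0[of x] \<open>0 \<le> D\<close> unfolding dec_major_def
      by (cases "ess_sup_tail I g x") (auto simp: indicator_def)
  qed
  have "antimono (dec_major I g)"
    by (intro antimonoI dec_major_antimono[OF g] finite)
  then have "dec_major I g \<in> borel_measurable (lebesgue_on I)"
    by (rule antimono_borel_measurable_lebesgue_on)
  note major = banach_ideal_space_dominated[OF banach_ideal this indicator_b \<open>0 \<le> D\<close>]
  have "dec_major I g \<in> X" "N (dec_major I g) \<le> D * N (indicator {0..b})"
    using major major_le dec_major_nonneg[OF g] by (auto simp: abs_mult)
  then show "g \<in> tilde_space I X" "tilde_norm I N g \<le> D * N (indicator {0..b})"
    unfolding tilde_space_def tilde_norm_def using g finite by auto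
qed

text \<open>The indicator of (0, y] rather than [0, y]: the majorant may be infinite at 0, where
  \<open>dec_major\<close> takes the junk value 0.\<close>
lemma tilde_norm_ge:
  assumes u: "u \<in> tilde_space I X" and y: "y \<in> I" "0 < y" and indicator_y: "indicator {0<..y} \<in> X"
  shows "dec_major I u y * N (indicator {0<..y}) \<le> tilde_norm I N u"
proof -
  have meas: "u \<in> borel_measurable (lebesgue_on I)"
    and finite: "\<And>x. x \<in> I \<Longrightarrow> 0 < x \<Longrightarrow> ess_sup_tail I u x < \<infinity>"
    and major: "dec_major I u \<in> X"
    using u unfolding tilde_space_def by auto
  have "dec_major I u y * \<bar>indicator {0<..y} x\<bar> \<le> \<bar>dec_major I u x\<bar>" if "x \<in> I" for x
    using that nonneg dec_major_antimono[OF meas _ finite] dec_major_nonneg[OF meas]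
    by (auto simp: indicator_def)
  then show ?thesis
    unfolding tilde_norm_def
    using banach_ideal_space_minorant[OF banach_ideal major indicator_y dec_major_nonneg[OF meas]]
    by (simp add: mult.commute)
qed

lemma rescale_esssup_le:
  assumes meas: "u \<in> borel_measurable (lebesgue_on I)"
  shows "(\<lambda>z. u (1/4 + z/4)) \<in> borel_measurable (lebesgue_on {0..1})"
    "esssup (lebesgue_on {0..1}) (\<lambda>z. ereal \<bar>u (1/4 + z/4)\<bar>) \<le> ess_sup_tail I u (1/4)"
proof -
  define e where "e = ess_sup_tail I u (1/4)"
  define U where "U y = indicator I y * u y" for y
  have [measurable]: "U \<in> borel_measurable lebesgue"
    using meas borel_measurable_restrict_space_iff[of I lebesgue u] by (simp add: U_def[abs_def])
  have U_eq: "U (1/4 + z/4) = u (1/4 + z/4)" if "z \<in> {0..1}" for z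
  proof -
    have "1/4 + z/4 \<in> I" using that by (intro unit_interval_in_I) auto
    then show ?thesis by (simp add: U_def)
  qed
  have "(\<lambda>z. U (1/4 + (1/4) *\<^sub>R z)) \<in> borel_measurable lebesgue"
    by (intro borel_measurable_affine) auto
  then have "(\<lambda>z. U (1/4 + z/4)) \<in> borel_measurable (lebesgue_on {0..1})"
    by (auto intro: measurable_restrict_space1)
  then show rescale_meas: "(\<lambda>z. u (1/4 + z/4)) \<in> borel_measurable (lebesgue_on {0..1})"
    by (rule measurable_cong[THEN iffD1, rotated]) (simp add: U_eq)
  have "AE y in lebesgue_on ({1/4..} \<inter> I). ereal \<bar>u y\<bar> \<le> e"
    unfolding e_def ess_sup_tail_def by (rule esssup_AE)
  then have "AE y in lebesgue. y \<in> {1/4..} \<inter> I \<longrightarrow> ereal \<bar>u y\<bar> \<le> e"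
    by (simp add: AE_lebesgue_on_iff atLeast_Int_sets_lebesgue)
  then have "AE y in lebesgue. y \<in> {1/4..1/2} \<longrightarrow> ereal \<bar>U y\<bar> \<le> e"
    by eventually_elim (auto simp: U_def unit_interval_in_I)
  then have "AE y in lebesgue_on {1/4..1/2}. ereal \<bar>U y\<bar> \<le> e"
    by (simp add: AE_lebesgue_on_iff)
  moreover have "{y. ereal \<bar>U y\<bar> \<le> e} \<in> sets lebesgue"
    by (intro sets_lebesgue_Collect) measurable
  ultimately have "AE z in lebesgue_on {0..1}. ereal \<bar>U (1/4 + z/4)\<bar> \<le> e"
    using AE_lebesgue_on_affine_iff[of "1/4" "1/2" "\<lambda>y. ereal \<bar>U y\<bar> \<le> e"] by simp
  moreover have "AE z in lebesgue_on {0..1}. z \<in> {0..1}"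
    by (rule AE_I2) simp
  ultimately have "AE z in lebesgue_on {0..1}. ereal \<bar>u (1/4 + z/4)\<bar> \<le> e"
    by eventually_elim (simp add: U_eq)
  then show "esssup (lebesgue_on {0..1}) (\<lambda>z. ereal \<bar>u (1/4 + z/4)\<bar>) \<le> e"
    using rescale_meas by (intro esssup_I) auto
qed

lemma rescale_in_Linf_01:
  assumes u: "u \<in> tilde_space I X"
  shows "(\<lambda>z. u (1/4 + z/4)) \<in> Linf_01" "Linf_norm (\<lambda>z. u (1/4 + z/4)) \<le> dec_major I u (1/4)"
proof -
  have meas: "u \<in> borel_measurable (lebesgue_on I)" and finite: "ess_sup_tail I u (1/4) < \<infinity>"
    using u unit_interval_in_I[of "1/4"] unfolding tilde_space_def by auto
  note rescale = rescale_esssup_le[OF meas]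
  with finite show "(\<lambda>z. u (1/4 + z/4)) \<in> Linf_01"
    unfolding Linf_01_def by auto
  show "Linf_norm (\<lambda>z. u (1/4 + z/4)) \<le> dec_major I u (1/4)"
    using rescale(2) finite ess_sup_tail_bot_or_nonneg[OF meas, of "1/4"]
    unfolding Linf_norm_def dec_major_def by (rule real_of_ereal_mono_bot_or_nonneg)
qed

lemma compress_tilde_space:
  assumes f: "f \<in> Linf_01"
    and indicator_half: "indicator {0..1/2} \<in> X" and indicator_quarter: "indicator {0<..1/4} \<in> X"
  shows "compress f \<in> tilde_space I X"
    "N (indicator {0<..1/4}) * Linf_norm f \<le> tilde_norm I N (compress f)"
    "tilde_norm I N (compress f) \<le> N (indicator {0..1/2}) * Linf_norm f"
proof -
  have f_meas: "f \<in> borel_measurable (lebesgue_on {0..1})"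
    using f by (simp add: Linf_01_def)
  have meas: "compress f \<in> borel_measurable (lebesgue_on I)"
    using compress_measurable[OF f_meas] by (rule measurable_restrict_space1)
  have AE_bound: "AE x in lebesgue_on I. \<bar>compress f x\<bar> \<le> Linf_norm f"
    unfolding AE_lebesgue_on_iff[OF sets_I] using compress_Linf_AE_bound[OF f] by eventually_elim simp
  have support: "\<And>y. 1/2 < y \<Longrightarrow> compress f y = 0"
    by (simp add: compress_def)
  note bounded = tilde_space_of_bounded_support[OF meas Linf_norm_nonneg[OF f] AE_bound support indicator_half]
  show tilde: "compress f \<in> tilde_space I X"
    and "tilde_norm I N (compress f) \<le> N (indicator {0..1/2}) * Linf_norm f"
    using bounded by (simp_all add: mult.commute)
  have "Linf_norm (\<lambda>z. compress f (1/4 + z/4)) = Linf_norm f"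
    unfolding Linf_norm_def using rescale_esssup_le(1)[OF meas] f_meas
    by (subst esssup_AE_cong) (auto intro!: AE_I2 simp: compress_at_affine)
  then have "Linf_norm f \<le> dec_major I (compress f) (1/4)"
    using rescale_in_Linf_01(2)[OF tilde] by simp
  then have "Linf_norm f * N (indicator {0<..1/4}) \<le> dec_major I (compress f) (1/4) * N (indicator {0<..1/4})"
    using banach_ideal_space_norm_nonneg[OF banach_ideal indicator_quarter] by (rule mult_right_mono)
  also have "\<dots> \<le> tilde_norm I N (compress f)"
    by (rule tilde_norm_ge[OF tilde unit_interval_in_I _ indicator_quarter]) auto
  finally show "N (indicator {0<..1/4}) * Linf_norm f \<le> tilde_norm I N (compress f)"
    by (simp add: mult.commute)
qed

lemma indicator_Ioc_in_space:
  assumes "indicator {0..y} \<in> X"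
  shows "indicator {0<..y} \<in> X"
proof (rule banach_ideal_space_dominated(1)[OF banach_ideal])
  show "indicator {0<..y} \<in> borel_measurable (lebesgue_on I)"
    by (intro measurable_restrict_space1 borel_measurable_indicator) simp
  show "indicator {0..y} \<in> X" by fact
  show "\<bar>indicator {0<..y} x :: real\<bar> \<le> 1 * \<bar>indicator {0..y} x\<bar>" for x :: real
    by (simp add: indicator_def)
qed simp

lemma tilde_space_complemented_Linf:
  assumes indicator_half: "indicator {0..1/2} \<in> X" and "indicator {0..1/4} \<in> X"
  shows "has_complemented_copy (tilde_space I X) (tilde_norm I N) Linf_01 Linf_norm"
proof -
  have indicator_quarter: "indicator {0<..1/4} \<in> X"
    using assms(2) by (rule indicator_Ioc_in_space)
  let ?c = "N (indicator {0<..1/4})" and ?C = "N (indicator {0..1/2})"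
  have "0 < ?c"
    using unit_interval_subset
    by (intro banach_ideal_space_norm_pos[OF banach_ideal indicator_quarter] not_AE_indicator_eq_0) auto
  have "0 \<le> ?C" by (rule banach_ideal_space_norm_nonneg[OF banach_ideal indicator_half])
  note compress = compress_tilde_space[OF _ indicator_half indicator_quarter]
  have factors: "(\<lambda>z. u (1/4 + z/4)) \<in> Linf_01 \<and> cutoff u = compress (\<lambda>z. u (1/4 + z/4))"
    if "u \<in> tilde_space I X" for u
    using rescale_in_Linf_01(1)[OF that] cutoff_eq_compress by blast
  have "tilde_norm I N (cutoff u) \<le> ?C / ?c * tilde_norm I N u" if u: "u \<in> tilde_space I X" for u
  proof -
    note rescale = rescale_in_Linf_01[OF u]
    have "tilde_norm I N (cutoff u) \<le> ?C * Linf_norm (\<lambda>z. u (1/4 + z/4))"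
      unfolding cutoff_eq_compress by (rule compress(3)[OF rescale(1)])
    also have "\<dots> \<le> ?C * dec_major I u (1/4)"
      using rescale(2) \<open>0 \<le> ?C\<close> by (rule mult_left_mono)
    also have "\<dots> \<le> ?C * (tilde_norm I N u / ?c)"
      using tilde_norm_ge[OF u unit_interval_in_I _ indicator_quarter] \<open>0 < ?c\<close> \<open>0 \<le> ?C\<close>
      by (intro mult_left_mono) (auto simp: field_simps)
    finally show ?thesis by simp
  qed
  then show ?thesis
    using \<open>0 < ?c\<close> compress factors
    by (intro has_complemented_copyI[where T = compress and P = cutoff and R = "\<lambda>u z. u (1/4 + z/4)"
          and K = "?C / ?c"])
      (auto simp: tilde_norm_zero compress_linear cutoff_linear cutoff_compress)
qed

lemma tilde_space_nontrivial:
  assumes "indicator {0..1/2} \<in> X"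
  shows "\<exists>f\<in>tilde_space I X. \<not> (AE x in lebesgue_on I. f x = 0)"
proof
  show "indicator {1/4..1/2} \<in> tilde_space I X"
    using assms
    by (intro tilde_space_of_bounded_support(1)[where D = 1 and b = "1/2"] measurable_restrict_space1
        borel_measurable_indicator) auto
  show "\<not> (AE x in lebesgue_on I. (indicator {1/4..1/2} x :: real) = 0)"
    using unit_interval_subset by (intro not_AE_indicator_eq_0) auto
qed

end

section \<open>The Cesaro space CX\<close>

lemma cesaro_abs_measurable:
  fixes g :: "real \<Rightarrow> real"
  assumes g: "integrable lebesgue g"
  shows "cesaro (\<lambda>t. \<bar>g t\<bar>) \<in> borel_measurable (lebesgue_on S)"
proof -
  define G where "G x = integral\<^sup>L (lebesgue_on {0..x}) (\<lambda>t. \<bar>g t\<bar>)" for x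
  have "integrable (lebesgue_on {0..x}) g" for x
    using integrable_mult_indicator[OF _ g, of "{0..x}"] by (simp add: integrable_lebesgue_on_iff)
  then have "mono G"
    unfolding G_def by (intro monoI integral_lebesgue_on_mono_set) auto
  then have "(\<lambda>x. G x / x) \<in> borel_measurable borel"
    using borel_measurable_mono by measurable
  moreover have "cesaro (\<lambda>t. \<bar>g t\<bar>) = (\<lambda>x. G x / x)"
    unfolding cesaro_def G_def by auto
  ultimately show ?thesis by (simp add: borel_measurable_lebesgue_on_of_borel)
qed

lemma cesaro_abs_of_supported:
  fixes g :: "real \<Rightarrow> real"
  assumes g: "integrable lebesgue g" and support: "\<And>y. y < a \<Longrightarrow> g y = 0"
  shows "\<And>x. x < a \<Longrightarrow> cesaro (\<lambda>t. \<bar>g t\<bar>) x = 0"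
    "\<And>x. 0 < x \<Longrightarrow> \<bar>cesaro (\<lambda>t. \<bar>g t\<bar>) x\<bar> \<le> (\<integral>t. \<bar>g t\<bar> \<partial>lebesgue) / x"
proof -
  fix x :: real
  have integral_eq: "integral\<^sup>L (lebesgue_on {0..x}) (\<lambda>t. \<bar>g t\<bar>) = (\<integral>t. \<bar>g t\<bar> * indicator {0..x} t \<partial>lebesgue)"
    by (simp add: integral_lebesgue_on_eq mult.commute)
  {
    assume "x < a"
    then have "(\<lambda>t. \<bar>g t\<bar> * indicator {0..x} t) = (\<lambda>t. 0)"
      using support by (auto simp: fun_eq_iff indicator_def)
    then show "cesaro (\<lambda>t. \<bar>g t\<bar>) x = 0"
      unfolding cesaro_def integral_eq by simp
  }
  assume "0 < x"
  have "0 \<le> (\<integral>t. \<bar>g t\<bar> * indicator {0..x} t \<partial>lebesgue)"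
    by (rule integral_nonneg_AE) simp
  moreover have "(\<integral>t. \<bar>g t\<bar> * indicator {0..x} t \<partial>lebesgue) \<le> (\<integral>t. \<bar>g t\<bar> \<partial>lebesgue)"
    using g by (intro integral_mono integrable_real_mult_indicator) (auto simp: indicator_def)
  ultimately show "\<bar>cesaro (\<lambda>t. \<bar>g t\<bar>) x\<bar> \<le> (\<integral>t. \<bar>g t\<bar> \<partial>lebesgue) / x"
    using \<open>0 < x\<close> unfolding cesaro_def integral_eq by (simp add: divide_right_mono)
qed

locale cesaro_bounded_ideal_space = ideal_space_on_interval +
  assumes cesaro_bounded: "cesaro_bounded I X N"
begin

lemma integrable_initial_segment: "f \<in> X \<Longrightarrow> x \<in> I \<Longrightarrow> 0 < x \<Longrightarrow> integrable (lebesgue_on {0..x}) f"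
  using cesaro_bounded unfolding cesaro_bounded_def loc_int_def by blast

lemma cesaro_in_space: "f \<in> X \<Longrightarrow> cesaro f \<in> X"
  using cesaro_bounded unfolding cesaro_bounded_def by blast

lemma cesaro_ge_of_pos:
  assumes f0: "f0 \<in> X" "AE x in lebesgue_on I. 0 < f0 x" and a: "0 < a" "a \<le> 1"
  defines "m \<equiv> integral\<^sup>L (lebesgue_on {0..a}) f0"
  shows "0 < m" "\<And>x. x \<in> I \<Longrightarrow> a \<le> x \<Longrightarrow> m / x \<le> cesaro f0 x"
proof -
  have pos_on: "AE x in lebesgue_on {0..y}. 0 < f0 x" if "y \<in> I" for y
    using f0(2) initial_segment[OF that] by (rule AE_lebesgue_on_subset) auto
  have a_I: "a \<in> I" using a by (intro unit_interval_in_I) auto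
  have int_a: "integrable (lebesgue_on {0..a}) f0"
    using integrable_initial_segment[OF f0(1) a_I a(1)] .
  have "m \<noteq> 0"
  proof
    assume "m = 0"
    then have "AE x in lebesgue_on {0..a}. f0 x = 0"
      using pos_on[OF a_I] unfolding m_def
      by (subst integral_nonneg_eq_0_iff_AE[OF int_a, symmetric]) (auto elim: eventually_mono)
    with pos_on[OF a_I] have "AE x in lebesgue_on {0..a}. False"
      by eventually_elim simp
    with a(1) show False
      by (simp add: eventually_False ae_filter_eq_bot_iff emeasure_restrict_space)
  qed
  moreover have "0 \<le> m"
    unfolding m_def using pos_on[OF a_I] by (intro integral_nonneg_AE) (auto elim: eventually_mono)
  ultimately show "0 < m" by simp
  fix x assume x: "x \<in> I" "a \<le> x"
  have "m \<le> integral\<^sup>L (lebesgue_on {0..x}) f0"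
    unfolding m_def using x a pos_on[OF x(1)]
    by (intro integral_lebesgue_on_mono_set integrable_initial_segment[OF f0(1)]) (auto elim: eventually_mono)
  then show "m / x \<le> cesaro f0 x"
    using x a unfolding cesaro_def by (simp add: divide_right_mono)
qed

lemma indicator_tail_in_space:
  assumes b: "0 < b" "b < 1"
  shows "indicator {b..1} \<in> X" "0 < N (indicator {b..1})"
proof -
  obtain f0 where f0: "f0 \<in> X" "AE x in lebesgue_on I. 0 < f0 x"
    using banach_ideal_spaceD(7)[OF banach_ideal] by blast
  define m where "m = integral\<^sup>L (lebesgue_on {0..b}) f0"
  note lower = cesaro_ge_of_pos[OF f0 b(1) less_imp_le[OF b(2)], folded m_def]
  have "\<bar>indicator {b..1} x\<bar> \<le> 1 / m * \<bar>cesaro f0 x\<bar>" if "x \<in> I" for x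
  proof (cases "x \<in> {b..1}")
    case True
    then have "m \<le> m / x" using b lower(1) by (simp add: le_divide_eq)
    also have "\<dots> \<le> cesaro f0 x" using lower(2) True that b by auto
    finally show ?thesis using True lower(1) by (simp add: field_simps)
  qed (use lower(1) in simp)
  then show in_X: "indicator {b..1} \<in> X"
    using b lower(1)
    by (intro banach_ideal_space_dominated(1)[OF banach_ideal _ cesaro_in_space[OF f0(1)], where c = "1 / m"]
        measurable_restrict_space1 borel_measurable_indicator) auto
  show "0 < N (indicator {b..1})"
    using b unit_interval_subset
    by (intro banach_ideal_space_norm_pos[OF banach_ideal in_X] not_AE_indicator_eq_0) auto
qed

lemma cesaro_norm_ge_integral:
  assumes u: "u \<in> cesaro_space I X" and b: "0 < b" "b < 1"
  shows "N (indicator {b..1}) * integral\<^sup>L (lebesgue_on {0..b}) (\<lambda>t. \<bar>u t\<bar>) \<le> cesaro_norm N u"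
proof -
  define B where "B = integral\<^sup>L (lebesgue_on {0..b}) (\<lambda>t. \<bar>u t\<bar>)"
  have int: "integrable (lebesgue_on {0..x}) (\<lambda>t. \<bar>u t\<bar>)" if "x \<in> I" "0 < x" for x
    using u that unfolding cesaro_space_def loc_int_def by auto
  have "0 \<le> B" unfolding B_def by (rule integral_nonneg_AE) simp
  have "B * \<bar>indicator {b..1} x\<bar> \<le> \<bar>cesaro (\<lambda>t. \<bar>u t\<bar>) x\<bar>" if "x \<in> I" for x
  proof (cases "x \<in> {b..1}")
    case True
    then have "B \<le> integral\<^sup>L (lebesgue_on {0..x}) (\<lambda>t. \<bar>u t\<bar>)"
      unfolding B_def using that b by (intro integral_lebesgue_on_mono_set int) auto
    also have "\<dots> \<le> integral\<^sup>L (lebesgue_on {0..x}) (\<lambda>t. \<bar>u t\<bar>) / x"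
      using True b by (auto simp: le_divide_eq intro!: mult_left_le integral_nonneg_AE)
    finally show ?thesis using True b unfolding cesaro_def by simp
  qed (simp add: \<open>0 \<le> B\<close>)
  then show ?thesis
    using indicator_tail_in_space[OF b] u \<open>0 \<le> B\<close>
    unfolding B_def cesaro_norm_def cesaro_space_def
    by (subst mult.commute) (intro banach_ideal_space_minorant[OF banach_ideal]; auto)
qed

lemma cesaro_norm_le_of_supported:
  assumes f0: "f0 \<in> X" "AE x in lebesgue_on I. 0 < f0 x" and a: "0 < a" "a \<le> 1"
    and g: "integrable lebesgue g" and support: "\<And>y. y < a \<Longrightarrow> g y = 0"
  defines "m \<equiv> integral\<^sup>L (lebesgue_on {0..a}) f0"
  shows "g \<in> cesaro_space I X" "cesaro_norm N g \<le> N (cesaro f0) / m * (\<integral>t. \<bar>g t\<bar> \<partial>lebesgue)"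
proof -
  define A where "A = (\<integral>t. \<bar>g t\<bar> \<partial>lebesgue)"
  have "0 \<le> A" unfolding A_def by (rule integral_nonneg_AE) simp
  note lower = cesaro_ge_of_pos[OF f0 a, folded m_def]
  note cesaro_g = cesaro_abs_of_supported[OF g support, folded A_def]
  have "\<bar>cesaro (\<lambda>t. \<bar>g t\<bar>) x\<bar> \<le> A / m * \<bar>cesaro f0 x\<bar>" if "x \<in> I" for x
  proof (cases "a \<le> x")
    case True
    then have "\<bar>cesaro (\<lambda>t. \<bar>g t\<bar>) x\<bar> \<le> A / x" using a cesaro_g(2) by simp
    also have "\<dots> = A / m * (m / x)" using lower(1) by simp
    also have "\<dots> \<le> A / m * \<bar>cesaro f0 x\<bar>"
      using lower \<open>0 \<le> A\<close> that True by (intro mult_left_mono) (auto intro: order_trans[OF _ abs_ge_self])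
    finally show ?thesis .
  qed (use lower(1) \<open>0 \<le> A\<close> in \<open>simp add: cesaro_g(1)\<close>)
  then have "cesaro (\<lambda>t. \<bar>g t\<bar>) \<in> X" "N (cesaro (\<lambda>t. \<bar>g t\<bar>)) \<le> A / m * N (cesaro f0)"
    using banach_ideal_space_dominated[OF banach_ideal cesaro_abs_measurable[OF g] cesaro_in_space[OF f0(1)],
        of "A / m"]
      \<open>0 \<le> A\<close> lower(1) by auto
  moreover have "integrable (lebesgue_on {0..x}) g" for x
    using integrable_mult_indicator[OF _ g, of "{0..x}"] by (simp add: integrable_lebesgue_on_iff)
  moreover have "g \<in> borel_measurable (lebesgue_on I)"
    using g by (intro measurable_restrict_space1 borel_measurable_integrable)
  ultimately show "g \<in> cesaro_space I X" "cesaro_norm N g \<le> N (cesaro f0) / m * A"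
    unfolding cesaro_space_def cesaro_norm_def loc_int_def by (auto simp: field_simps)
qed

lemma cesaro_space_of_supported:
  assumes a: "0 < a" "a \<le> 1"
  obtains K where "0 \<le> K"
    "\<And>g. integrable lebesgue g \<Longrightarrow> (\<And>y. y < a \<Longrightarrow> g y = 0) \<Longrightarrow>
      g \<in> cesaro_space I X \<and> cesaro_norm N g \<le> K * (\<integral>t. \<bar>g t\<bar> \<partial>lebesgue)"
proof -
  obtain f0 where f0: "f0 \<in> X" "AE x in lebesgue_on I. 0 < f0 x"
    using banach_ideal_spaceD(7)[OF banach_ideal] by blast
  show ?thesis
    using that cesaro_norm_le_of_supported[OF f0 a] cesaro_ge_of_pos(1)[OF f0 a]
      banach_ideal_space_norm_nonneg[OF banach_ideal cesaro_in_space[OF f0(1)]]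
    by (metis divide_nonneg_pos)
qed

lemma cutoff_L1:
  assumes u: "u \<in> cesaro_space I X"
  shows "integrable lebesgue (cutoff u)"
    "(\<integral>t. \<bar>cutoff u t\<bar> \<partial>lebesgue) \<le> integral\<^sup>L (lebesgue_on {0..1/2}) (\<lambda>t. \<bar>u t\<bar>)"
    "(\<lambda>z. u (1/4 + z/4)) \<in> L1_01"
proof -
  define V where "V t = indicator {0..1/2} t * u t" for t
  have "integrable (lebesgue_on {0..1/2}) u"
    using u unit_interval_in_I[of "1/2"] unfolding cesaro_space_def loc_int_def by auto
  then have V: "integrable lebesgue V"
    unfolding V_def by (simp add: integrable_lebesgue_on_iff)
  have cutoff_V: "cutoff u = (\<lambda>t. indicator {1/4..1/2} t * V t)"
    by (auto simp: cutoff_def V_def fun_eq_iff indicator_def)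
  show int: "integrable lebesgue (cutoff u)"
    unfolding cutoff_V using integrable_mult_indicator[OF _ V, of "{1/4..1/2}"] by simp
  have "(\<integral>t. \<bar>cutoff u t\<bar> \<partial>lebesgue) \<le> (\<integral>t. \<bar>V t\<bar> \<partial>lebesgue)"
    using int V by (intro integral_mono integrable_abs) (auto simp: cutoff_V abs_mult indicator_def)
  also have "\<dots> = integral\<^sup>L (lebesgue_on {0..1/2}) (\<lambda>t. \<bar>u t\<bar>)"
    by (simp add: V_def integral_lebesgue_on_eq abs_mult)
  finally show "(\<integral>t. \<bar>cutoff u t\<bar> \<partial>lebesgue) \<le> integral\<^sup>L (lebesgue_on {0..1/2}) (\<lambda>t. \<bar>u t\<bar>)" .
  have "integrable lebesgue (\<lambda>z. cutoff u (1/4 + (1/4) * z))"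
    using lebesgue_integrable_real_affine[OF int, of "1/4" "1/4"] by simp
  moreover have "(\<lambda>z. cutoff u (1/4 + (1/4) * z)) = (\<lambda>z. indicator {0..1} z * u (1/4 + z/4))"
    by (auto simp: cutoff_def fun_eq_iff indicator_def)
  ultimately show "(\<lambda>z. u (1/4 + z/4)) \<in> L1_01"
    unfolding L1_01_def by (simp add: integrable_lebesgue_on_iff)
qed

lemma cesaro_norm_zero: "cesaro_norm N (\<lambda>x. 0) = 0"
  unfolding cesaro_norm_def cesaro_def using banach_ideal_space_zero[OF banach_ideal] by simp

lemma cesaro_norm_compress_ge:
  assumes f: "f \<in> L1_01" and "compress f \<in> cesaro_space I X"
  shows "N (indicator {1/2..1}) / 4 * L1_norm f \<le> cesaro_norm N (compress f)"
proof -
  have "integral\<^sup>L (lebesgue_on {0..1/2}) (\<lambda>t. \<bar>compress f t\<bar>) = L1_norm f / 4"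
    using compress_L1(2)[OF f] by (subst integral_lebesgue_on_eq_of_support) (auto simp: compress_def)
  then have "N (indicator {1/2..1}) / 4 * L1_norm f =
      N (indicator {1/2..1}) * integral\<^sup>L (lebesgue_on {0..1/2}) (\<lambda>t. \<bar>compress f t\<bar>)"
    by simp
  also have "\<dots> \<le> cesaro_norm N (compress f)"
    using assms(2) by (intro cesaro_norm_ge_integral) auto
  finally show ?thesis .
qed

lemma cesaro_space_complemented_L1:
  "has_complemented_copy (cesaro_space I X) (cesaro_norm N) L1_01 L1_norm"
proof -
  let ?c = "N (indicator {1/2..1})"
  have "0 < ?c" using indicator_tail_in_space[of "1/2"] by simp
  obtain K where "0 \<le> K" and supported:
    "\<And>g. integrable lebesgue g \<Longrightarrow> (\<And>y. y < 1/4 \<Longrightarrow> g y = 0) \<Longrightarrow>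
      g \<in> cesaro_space I X \<and> cesaro_norm N g \<le> K * (\<integral>t. \<bar>g t\<bar> \<partial>lebesgue)"
    using cesaro_space_of_supported[of "1/4"] by auto
  have compress_bounds: "compress f \<in> cesaro_space I X \<and> ?c / 4 * L1_norm f \<le> cesaro_norm N (compress f)
      \<and> cesaro_norm N (compress f) \<le> K / 4 * L1_norm f" if f: "f \<in> L1_01" for f
  proof -
    note L1 = compress_L1[OF f]
    have "\<And>y. y < 1/4 \<Longrightarrow> compress f y = 0" by (simp add: compress_def)
    then have "compress f \<in> cesaro_space I X \<and> cesaro_norm N (compress f) \<le> K / 4 * L1_norm f"
      using supported[OF L1(1)] L1(2) by simp
    with cesaro_norm_compress_ge[OF f] show ?thesis by simp
  qed
  have cutoff_bound: "cesaro_norm N (cutoff u) \<le> K / ?c * cesaro_norm N u" if u: "u \<in> cesaro_space I X" for u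
  proof -
    note L1 = cutoff_L1[OF u]
    have "\<And>y. y < 1/4 \<Longrightarrow> cutoff u y = 0" by (simp add: cutoff_def)
    then have "cesaro_norm N (cutoff u) \<le> K * (\<integral>t. \<bar>cutoff u t\<bar> \<partial>lebesgue)"
      using supported[OF L1(1)] by blast
    also have "\<dots> \<le> K * integral\<^sup>L (lebesgue_on {0..1/2}) (\<lambda>t. \<bar>u t\<bar>)"
      using L1(2) \<open>0 \<le> K\<close> by (rule mult_left_mono)
    also have "\<dots> \<le> K * (cesaro_norm N u / ?c)"
      using cesaro_norm_ge_integral[OF u, of "1/2"] \<open>0 < ?c\<close> \<open>0 \<le> K\<close>
      by (intro mult_left_mono) (auto simp: field_simps)
    finally show ?thesis by simp
  qed
  have factors: "(\<lambda>z. u (1/4 + z/4)) \<in> L1_01 \<and> cutoff u = compress (\<lambda>z. u (1/4 + z/4))"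
    if "u \<in> cesaro_space I X" for u
    using cutoff_L1(3)[OF that] cutoff_eq_compress by blast
  show ?thesis
    using \<open>0 < ?c\<close> compress_bounds cutoff_bound factors
    by (intro has_complemented_copyI[where T = compress and P = cutoff and R = "\<lambda>u z. u (1/4 + z/4)"
          and c = "?c / 4" and C = "K / 4" and K = "K / ?c"])
      (auto simp: cesaro_norm_zero compress_linear cutoff_linear cutoff_compress)
qed

end

theorem proposition1:
  fixes I :: "real set" and X :: "(real \<Rightarrow> real) set" and N :: "(real \<Rightarrow> real) \<Rightarrow> real"
  assumes "I = {0..1} \<or> I = {0..}"
    and "banach_ideal_space I X N"
    and "cesaro_bounded I X N"
  shows "has_complemented_copy (cesaro_space I X) (cesaro_norm N) L1_01 L1_norm \<and>
         ((\<forall>a::real. 0 < a \<and> a < 1 \<longrightarrow> (indicator {0..a} :: real \<Rightarrow> real) \<in> X) \<longrightarrow>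
            (\<exists>f\<in>tilde_space I X. \<not> (AE x in lebesgue_on I. f x = 0)) \<and>
            has_complemented_copy (tilde_space I X) (tilde_norm I N) Linf_01 Linf_norm)"
proof -
  interpret cesaro_bounded_ideal_space I X N
  proof
    show "banach_ideal_space I X N" "cesaro_bounded I X N" by fact+
    show "I \<in> sets lebesgue" "{0..1} \<subseteq> I" "I \<subseteq> {0..}" "\<And>x. x \<in> I \<Longrightarrow> {0..x} \<subseteq> I"
      using assms(1) by auto
  qed
  have "indicator {0..1/2} \<in> X" "indicator {0..1/4} \<in> X"
    if "\<forall>a::real. 0 < a \<and> a < 1 \<longrightarrow> (indicator {0..a} :: real \<Rightarrow> real) \<in> X"
    using that by simp_all
  with cesaro_space_complemented_L1 tilde_space_nontrivial tilde_space_complemented_Linf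
  show ?thesis by simp
qed

end
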